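(* Let $f:X\to Y$ be an open, $SC^*$-irresolute bijection between topological spaces. If $I\subseteq Y$ is $gSC^*$-closed, then $f^{-1}(I)$ is $gSC^*$-closed in $X$.
   Context: For $A\subseteq Z$ in a topological space $Z$: $A$ is semi-open if $A\subseteq cl(int(A))$, semi-closed if its complement is semi-open; $scl(A)$ is the smallest semi-closed set containing $A$. $A$ is $c^*$-open if $int(cl(A))\subseteq A\subseteq cl(int(A))$. $A$ is $SC^*$-closed if $scl(A)\subseteq U$ whenever $A\subseteq U$ and $U$ is $c^*$-open; $A$ is $SC^*$-open if $Z\setminus A$ is $SC^*$-closed. $SC^*\text{-}cl(A)$ is the intersection of all $SC^*$-closed sets containing $A$. $A$ is $gSC^*$-closed if $SC^*\text{-}cl(A)\subseteq U$ whenever $A\subseteq U$ and $U$ is open. $f$ is $SC^*$-irresolute if $f^{-1}(N)$ is $SC^*$-open in $X$ for every $SC^*$-open $N\subseteq Y$. *)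

theory Defs
  imports "HOL-Analysis.Analysis"
begin

definition semi_open :: "'a topology \<Rightarrow> 'a set \<Rightarrow> bool" where
  "semi_open Z A \<longleftrightarrow> A \<subseteq> topspace Z \<and> A \<subseteq> Z closure_of (Z interior_of A)"

definition semi_closed :: "'a topology \<Rightarrow> 'a set \<Rightarrow> bool" where
  "semi_closed Z A \<longleftrightarrow> A \<subseteq> topspace Z \<and> semi_open Z (topspace Z - A)"

definition scl :: "'a topology \<Rightarrow> 'a set \<Rightarrow> 'a set" where
  "scl Z A = \<Inter> {F. semi_closed Z F \<and> A \<subseteq> F}"

definition cstar_open :: "'a topology \<Rightarrow> 'a set \<Rightarrow> bool" where
  "cstar_open Z A \<longleftrightarrow> A \<subseteq> topspace Z \<and>
     Z interior_of (Z closure_of A) \<subseteq> A \<and> A \<subseteq> Z closure_of (Z interior_of A)"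

definition SCstar_closed :: "'a topology \<Rightarrow> 'a set \<Rightarrow> bool" where
  "SCstar_closed Z A \<longleftrightarrow> A \<subseteq> topspace Z \<and>
     (\<forall>U. cstar_open Z U \<and> A \<subseteq> U \<longrightarrow> scl Z A \<subseteq> U)"

definition SCstar_open :: "'a topology \<Rightarrow> 'a set \<Rightarrow> bool" where
  "SCstar_open Z A \<longleftrightarrow> A \<subseteq> topspace Z \<and> SCstar_closed Z (topspace Z - A)"

definition SCstar_cl :: "'a topology \<Rightarrow> 'a set \<Rightarrow> 'a set" where
  "SCstar_cl Z A = topspace Z \<inter> \<Inter> {F. SCstar_closed Z F \<and> A \<subseteq> F}"

definition gSCstar_closed :: "'a topology \<Rightarrow> 'a set \<Rightarrow> bool" where
  "gSCstar_closed Z A \<longleftrightarrow> A \<subseteq> topspace Z \<and>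
     (\<forall>U. openin Z U \<and> A \<subseteq> U \<longrightarrow> SCstar_cl Z A \<subseteq> U)"

definition SCstar_irresolute :: "'a topology \<Rightarrow> 'b topology \<Rightarrow> ('a \<Rightarrow> 'b) \<Rightarrow> bool" where
  "SCstar_irresolute X Y f \<longleftrightarrow> f \<in> topspace X \<rightarrow> topspace Y \<and>
     (\<forall>N. SCstar_open Y N \<longrightarrow> SCstar_open X {x \<in> topspace X. f x \<in> N})"

end

theory Submission
  imports Defs
begin

text \<open>Irresolute maps pull back SC*-closed sets, so the SC*-closure of a preimage lies in
the preimage of the SC*-closure. Given an open U containing the preimage of I, the set f(U)
is open and, by surjectivity, contains I, hence contains SC*-cl(I); pulling back and using
injectivity gives SC*-cl(preimage of I) \<subseteq> preimage of f(U) = U.\<close>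

lemma SCstar_closed_preimage:
  assumes f: "SCstar_irresolute X Y f" and F: "SCstar_closed Y F"
  shows "SCstar_closed X {x \<in> topspace X. f x \<in> F}"
proof -
  have "F \<subseteq> topspace Y" using F by (simp add: SCstar_closed_def)
  then have "SCstar_open Y (topspace Y - F)"
    using F by (simp add: SCstar_open_def Diff_Diff_Int inf.absorb2)
  then have "SCstar_open X {x \<in> topspace X. f x \<in> topspace Y - F}"
    using f unfolding SCstar_irresolute_def by blast
  then have "SCstar_closed X (topspace X - {x \<in> topspace X. f x \<in> topspace Y - F})"
    by (simp add: SCstar_open_def)
  moreover have "topspace X - {x \<in> topspace X. f x \<in> topspace Y - F} = {x \<in> topspace X. f x \<in> F}"
    using f by (auto simp: SCstar_irresolute_def)
  ultimately show ?thesis by simp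
qed

lemma SCstar_cl_preimage_subset:
  assumes f: "SCstar_irresolute X Y f"
  shows "SCstar_cl X {x \<in> topspace X. f x \<in> A} \<subseteq> {x \<in> topspace X. f x \<in> SCstar_cl Y A}"
proof
  fix x assume x: "x \<in> SCstar_cl X {x \<in> topspace X. f x \<in> A}"
  then have "x \<in> topspace X" by (simp add: SCstar_cl_def)
  moreover have "f x \<in> F" if "SCstar_closed Y F" "A \<subseteq> F" for F
    using x SCstar_closed_preimage[OF f that(1)] that(2) unfolding SCstar_cl_def by blast
  moreover have "f x \<in> topspace Y" if "x \<in> topspace X"
    using f that by (auto simp: SCstar_irresolute_def)
  ultimately show "x \<in> {x \<in> topspace X. f x \<in> SCstar_cl Y A}"
    by (simp add: SCstar_cl_def)
qed

theorem proposition4p10: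
  fixes X :: "'a topology" and Y :: "'b topology" and f :: "'a \<Rightarrow> 'b" and I :: "'b set"
  assumes "open_map X Y f"
    and "SCstar_irresolute X Y f"
    and "bij_betw f (topspace X) (topspace Y)"
    and "gSCstar_closed Y I"
  shows "gSCstar_closed X {x \<in> topspace X. f x \<in> I}"
  unfolding gSCstar_closed_def
proof (intro conjI allI impI)
  fix U assume U: "openin X U \<and> {x \<in> topspace X. f x \<in> I} \<subseteq> U"
  then have UX: "U \<subseteq> topspace X" using openin_subset by blast
  have inj: "inj_on f (topspace X)" and surj: "f ` topspace X = topspace Y"
    using assms(3) by (simp_all add: bij_betw_def)
  have "openin Y (f ` U)" using assms(1) U by (simp add: open_map_def)
  moreover have "I \<subseteq> f ` U"
  proof
    fix y assume "y \<in> I"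
    moreover have "I \<subseteq> topspace Y" using assms(4) by (simp add: gSCstar_closed_def)
    ultimately obtain x where "x \<in> topspace X" "y = f x" using surj by blast
    then show "y \<in> f ` U" using U \<open>y \<in> I\<close> by blast
  qed
  ultimately have "SCstar_cl Y I \<subseteq> f ` U"
    using assms(4) by (simp add: gSCstar_closed_def)
  then have "{x \<in> topspace X. f x \<in> SCstar_cl Y I} \<subseteq> U"
    using inj_on_image_mem_iff[OF inj _ UX] by blast
  then show "SCstar_cl X {x \<in> topspace X. f x \<in> I} \<subseteq> U"
    using SCstar_cl_preimage_subset[OF assms(2)] by blast
qed auto

end
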